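(* Let $\theta\in M_{k,d}([0,\infty))$, $r\in(0,\infty)^k$, $\beta>0$, and let $\phi$ be a KMS$_\beta$ state of $(B_\theta,\alpha^r)$. Suppose $p,q\in\mathbb{N}^k$ satisfy $p^Tr=q^Tr$, let $f\in C(\mathbb{S}^d)$, and put $P:=(p\vee q)-p$. Then \[ \phi\big(V_p\,\iota(f)V_q^*\big)=\phi\big(V_{p+lP}\,\iota(f\circ R_{l\theta^TP})\,V_{q+lP}^*\big)\quad\text{for all }l\in\mathbb{N}. \] Moreover, if $p\neq q$ then $\phi(V_p\,\iota(f)V_q^* )=0$.
   Context: Vectors are columns; $A^T$ transpose; $p\vee q$ coordinatewise maximum. $B_\theta$ is the universal $C^*$-algebra generated by a unitary representation $U$ of $\mathbb{Z}^d$ and a Nica-covariant isometric representation $V$ of $\mathbb{N}^k$ ($V_pV_p^*V_qV_q^*=V_{p\vee q}V_{p\vee q}^*$) with $U_nV_p=e^{2\pi ip^T\theta n}V_pU_n$. $\alpha^r$ is the dynamics with $\alpha^r_t(U_n)=U_n$, $\alpha^r_t(V_p)=e^{itp^Tr}V_p$. $\mathbb{S}^d=\mathbb{R}^d/\mathbb{Z}^d$ (functions on it are $\mathbb{Z}^d$-periodic functions on $\mathbb{R}^d$), $g_n(x)=e^{2\pi ix^Tn}$, $\iota:C(\mathbb{S}^d)\to B_\theta$ the homomorphism with $\iota(g_n)=U_n$, and $R_y(x)=x+y$ for $y\in\mathbb{R}^d$. *)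

theory Defs
  imports "HOL-Analysis.Analysis"
begin

text \<open>A unital C*-algebra: a unital real Banach algebra together with a complex scalar
  multiplication sm (extending the real one) and an involution st satisfying the C*-identity.\<close>

definition cstar_algebra :: "(complex \<Rightarrow> 'a::{real_normed_algebra_1,banach} \<Rightarrow> 'a) \<Rightarrow> ('a \<Rightarrow> 'a) \<Rightarrow> bool"
  where "cstar_algebra sm st \<longleftrightarrow>
    (\<forall>r x. sm (complex_of_real r) x = scaleR r x) \<and>
    (\<forall>c x y. sm c (x + y) = sm c x + sm c y) \<and>
    (\<forall>c d x. sm (c + d) x = sm c x + sm d x) \<and>
    (\<forall>c d x. sm (c * d) x = sm c (sm d x)) \<and>
    (\<forall>c x y. sm c (x * y) = sm c x * y \<and> sm c (x * y) = x * sm c y) \<and>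
    (\<forall>c x. norm (sm c x) = cmod c * norm x) \<and>
    (\<forall>x. st (st x) = x) \<and>
    (\<forall>x y. st (x + y) = st x + st y) \<and>
    (\<forall>x y. st (x * y) = st y * st x) \<and>
    (\<forall>c x. st (sm c x) = sm (cnj c) (st x)) \<and>
    (\<forall>x. norm (st x * x) = norm x ^ 2)"

definition is_state :: "(complex \<Rightarrow> 'a \<Rightarrow> 'a) \<Rightarrow> ('a \<Rightarrow> 'a) \<Rightarrow> ('a::ring_1 \<Rightarrow> complex) \<Rightarrow> bool"
  where "is_state sm st \<phi> \<longleftrightarrow>
    (\<forall>x y. \<phi> (x + y) = \<phi> x + \<phi> y) \<and>
    (\<forall>c x. \<phi> (sm c x) = c * \<phi> x) \<and>
    (\<forall>x. Im (\<phi> (st x * x)) = 0 \<and> Re (\<phi> (st x * x)) \<ge> 0) \<and>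
    \<phi> 1 = 1"

definition star_automorphism :: "(complex \<Rightarrow> 'a \<Rightarrow> 'a) \<Rightarrow> ('a \<Rightarrow> 'a) \<Rightarrow> ('a::ring_1 \<Rightarrow> 'a) \<Rightarrow> bool"
  where "star_automorphism sm st h \<longleftrightarrow> bij h \<and>
    (\<forall>x y. h (x + y) = h x + h y) \<and> (\<forall>x y. h (x * y) = h x * h y) \<and>
    (\<forall>c x. h (sm c x) = sm c (h x)) \<and> (\<forall>x. h (st x) = st (h x)) \<and> h 1 = 1"

definition is_dynamics :: "(complex \<Rightarrow> 'a \<Rightarrow> 'a) \<Rightarrow> ('a \<Rightarrow> 'a) \<Rightarrow> (real \<Rightarrow> 'a::real_normed_algebra_1 \<Rightarrow> 'a) \<Rightarrow> bool"
  where "is_dynamics sm st \<alpha> \<longleftrightarrow>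
    (\<forall>t. star_automorphism sm st (\<alpha> t)) \<and>
    \<alpha> 0 = id \<and> (\<forall>s t. \<alpha> (s + t) = \<alpha> s \<circ> \<alpha> t) \<and>
    (\<forall>a. continuous_on UNIV (\<lambda>t. \<alpha> t a))"

definition is_KMS :: "real \<Rightarrow> (real \<Rightarrow> 'a \<Rightarrow> 'a) \<Rightarrow> ('a::times \<Rightarrow> complex) \<Rightarrow> bool"
  where "is_KMS \<beta> \<alpha> \<phi> \<longleftrightarrow>
    (\<forall>a b. \<exists>F :: complex \<Rightarrow> complex.
       continuous_on {z. 0 \<le> Im z \<and> Im z \<le> \<beta>} F \<and>
       F holomorphic_on {z. 0 < Im z \<and> Im z < \<beta>} \<and>
       bounded (F ` {z. 0 \<le> Im z \<and> Im z \<le> \<beta>}) \<and>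
       (\<forall>t. F (complex_of_real t) = \<phi> (a * \<alpha> t b)) \<and>
       (\<forall>t. F (complex_of_real t + \<i> * complex_of_real \<beta>) = \<phi> (\<alpha> t b * a)))"

definition bil :: "nat^'k \<Rightarrow> real^'d^'k \<Rightarrow> int^'d \<Rightarrow> real"
  where "bil p \<theta> n = (\<Sum>i\<in>UNIV. \<Sum>j\<in>UNIV. real (p$i) * (\<theta>$i$j) * real_of_int (n$j))"

definition thetaT :: "real^'d^'k \<Rightarrow> nat^'k \<Rightarrow> real^'d"
  where "thetaT \<theta> P = (\<chi> j. \<Sum>i\<in>UNIV. (\<theta>$i$j) * real (P$i))"

definition dotr :: "nat^'k \<Rightarrow> real^'k \<Rightarrow> real"
  where "dotr p r = (\<Sum>i\<in>UNIV. real (p$i) * r$i)"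

definition vmax :: "nat^'k \<Rightarrow> nat^'k \<Rightarrow> nat^'k"
  where "vmax p q = (\<chi> i. max (p$i) (q$i))"

definition Btheta_relations ::
  "(complex \<Rightarrow> 'a \<Rightarrow> 'a) \<Rightarrow> ('a \<Rightarrow> 'a) \<Rightarrow> real^'d^'k \<Rightarrow> (int^'d \<Rightarrow> 'a::ring_1) \<Rightarrow> (nat^'k \<Rightarrow> 'a) \<Rightarrow> bool"
  where "Btheta_relations sm st \<theta> U V \<longleftrightarrow>
    U 0 = 1 \<and> (\<forall>n m. U (n + m) = U n * U m) \<and>
    (\<forall>n. st (U n) * U n = 1 \<and> U n * st (U n) = 1) \<and>
    V 0 = 1 \<and> (\<forall>p q. V (p + q) = V p * V q) \<and>
    (\<forall>p. st (V p) * V p = 1) \<and>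
    (\<forall>p q. V p * st (V p) * (V q * st (V q)) = V (vmax p q) * st (V (vmax p q))) \<and>
    (\<forall>n p. U n * V p = sm (exp (2 * pi * \<i> * complex_of_real (bil p \<theta> n))) (V p * U n))"

text \<open>C(S^d): continuous Z^d-periodic functions R^d -> C.\<close>
definition Csd :: "(real^'d \<Rightarrow> complex) set"
  where "Csd = {f. continuous_on UNIV f \<and>
     (\<forall>x n. f (x + (\<chi> j. real_of_int (n$j))) = f x)}"

definition gchar :: "int^'d \<Rightarrow> real^'d \<Rightarrow> complex"
  where "gchar n x = exp (2 * pi * \<i> * complex_of_real (\<Sum>j\<in>UNIV. x$j * real_of_int (n$j)))"

definition is_iota ::
  "(complex \<Rightarrow> 'a \<Rightarrow> 'a) \<Rightarrow> ('a \<Rightarrow> 'a) \<Rightarrow> (int^'d \<Rightarrow> 'a::ring_1) \<Rightarrow> ((real^'d \<Rightarrow> complex) \<Rightarrow> 'a) \<Rightarrow> bool"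
  where "is_iota sm st U \<iota> \<longleftrightarrow>
    (\<forall>f\<in>Csd. \<forall>g\<in>Csd. \<iota> (\<lambda>x. f x + g x) = \<iota> f + \<iota> g \<and> \<iota> (\<lambda>x. f x * g x) = \<iota> f * \<iota> g) \<and>
    (\<forall>f\<in>Csd. \<forall>c. \<iota> (\<lambda>x. c * f x) = sm c (\<iota> f)) \<and>
    (\<forall>f\<in>Csd. \<iota> (\<lambda>x. cnj (f x)) = st (\<iota> f)) \<and>
    \<iota> (\<lambda>x. 1) = 1 \<and>
    (\<forall>n. \<iota> (gchar n) = U n)"

end

theory Submission
  imports Defs "HOL-Complex_Analysis.Complex_Analysis"
begin

text \<open>
  The KMS condition turns every eigenvector of the dynamics, \<open>\<alpha>\<^sub>t b = exp(i t c) b\<close>, into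
  the twisted trace property \<open>\<phi>(b a) = exp(-\<beta> c) \<phi>(a b)\<close>: the KMS function minus
  \<open>exp(i z c) \<phi>(a b)\<close> vanishes on the real line, hence on the whole strip.

  Nica covariance gives \<open>V\<^sub>q\<^sup>* V\<^sub>p = V\<^sub>Q V\<^sub>P\<^sup>*\<close> with \<open>P = (p\<or>q) - p\<close> and \<open>Q = (p\<or>q) - q\<close>.
  Moving \<open>V\<^sub>q\<^sup>*\<close> to the front with the trace property therefore shows that \<open>\<phi>\<close> kills
  \<open>V\<^sub>p U\<^sub>n (1 - V\<^sub>P V\<^sub>P\<^sup>*) V\<^sub>q\<^sup>*\<close>, and commuting \<open>V\<^sub>P\<close> past \<open>U\<^sub>n\<close> gives the shift identity
  for \<open>f = g\<^sub>n\<close>. Both sides are linear in \<open>f\<close> and bounded in the sup norm by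
  Cauchy--Schwarz, and trigonometric polynomials are dense in \<open>C(\<bbbS>\<^sup>d)\<close>, so the identity
  holds for all \<open>f\<close>; iterating it gives the first claim.

  If \<open>p \<noteq> q\<close> but \<open>p\<^sup>Tr = q\<^sup>Tr\<close>, then \<open>P\<^sup>Tr > 0\<close>. Since \<open>\<phi>(V\<^sub>m V\<^sub>m\<^sup>*) = exp(-\<beta> m\<^sup>Tr)\<close>,
  Cauchy--Schwarz bounds the \<open>l\<close>-th shifted term by a multiple of \<open>exp(-l \<beta> P\<^sup>Tr)\<close>,
  which tends to zero.
\<close>

section \<open>Functions on a strip vanishing on the real line\<close>

lemma zero_islimpt_Reals: "(0::complex) islimpt \<real>"
  unfolding islimpt_approachable
proof (intro allI impI)
  fix e :: real assume e: "0 < e"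
  show "\<exists>x'::complex\<in>\<real>. x' \<noteq> 0 \<and> dist x' 0 < e"
    by (rule bexI[where x="complex_of_real (e/2)"]) (use e in \<open>auto simp: dist_norm\<close>)
qed

text \<open>Schwarz reflection across \<open>\<real>\<close> extends \<open>F\<close> holomorphically to \<open>|Im z| < \<beta>\<close>,
  where it vanishes by the identity theorem.\<close>
lemma strip_function_vanishes:
  fixes F :: "complex \<Rightarrow> complex" and \<beta> :: real
  assumes contF: "continuous_on {z. 0 \<le> Im z \<and> Im z \<le> \<beta>} F"
    and holF: "F holomorphic_on {z. 0 < Im z \<and> Im z < \<beta>}"
    and zero: "\<And>t. F (complex_of_real t) = 0"
    and w: "0 \<le> Im w" "Im w < \<beta>"
  shows "F w = 0"
proof -
  define S where "S = {z. - \<beta> < Im z \<and> Im z < \<beta>}"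
  have b: "\<beta> > 0" using w by simp
  have oS: "open S" unfolding S_def
    by (simp add: open_Collect_conj open_halfspace_Im_gt open_halfspace_Im_lt)
  have cS: "convex S" unfolding S_def
    using convex_Int[OF convex_halfspace_Im_gt[of "-\<beta>"] convex_halfspace_Im_lt[of \<beta>]]
    by (simp add: Collect_conj_eq)
  define G where "G = (\<lambda>z. if 0 \<le> Im z then F z else cnj (F (cnj z)))"
  have holG: "G holomorphic_on S" unfolding G_def
  proof (rule Schwarz_reflection[OF oS])
    show "cnj ` S \<subseteq> S" unfolding S_def by auto
    show "F holomorphic_on S \<inter> {z. 0 < Im z}"
      by (rule holomorphic_on_subset[OF holF]) (auto simp: S_def)
    show "continuous_on (S \<inter> {z. 0 \<le> Im z}) F"
      by (rule continuous_on_subset[OF contF]) (auto simp: S_def)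
    show "F z \<in> \<real>" if "z \<in> S" "z \<in> \<real>" for z
      using that zero by (metis Reals_cases Reals_0)
  qed
  have "G w = 0"
  proof (rule analytic_continuation[OF holG oS convex_connected[OF cS], of "\<real>" 0])
    show "(\<real>::complex set) \<subseteq> S" using b by (auto simp: S_def elim!: Reals_cases)
    show "0 \<in> S" using b by (simp add: S_def)
    show "(0::complex) islimpt \<real>" by (rule zero_islimpt_Reals)
    show "G z = 0" if "z \<in> (\<real>::complex set)" for z
      using that zero by (auto simp: G_def elim!: Reals_cases)
    show "w \<in> S" using w by (simp add: S_def)
  qed
  then show ?thesis using w by (simp add: G_def)
qed

lemma strip_function_vanishes_on_upper_edge:
  fixes F :: "complex \<Rightarrow> complex" and \<beta> :: real
  assumes b: "\<beta> > 0"
    and contF: "continuous_on {z. 0 \<le> Im z \<and> Im z \<le> \<beta>} F"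
    and holF: "F holomorphic_on {z. 0 < Im z \<and> Im z < \<beta>}"
    and zero: "\<And>t. F (complex_of_real t) = 0"
  shows "F (complex_of_real t + \<i> * complex_of_real \<beta>) = 0"
proof -
  define z where "z n = complex_of_real t + \<i> * complex_of_real (\<beta> * real n / real (Suc n))" for n
  have z_strip: "z n \<in> {z. 0 \<le> Im z \<and> Im z \<le> \<beta>}" for n
    using b by (auto simp: z_def field_simps)
  have Fz: "F (z n) = 0" for n
    by (rule strip_function_vanishes[OF contF holF zero]) (use b in \<open>simp_all add: z_def field_simps\<close>)
  have "(\<lambda>n. \<beta> * (real n / real (Suc n))) \<longlonglongrightarrow> \<beta> * 1"
    by (intro tendsto_intros LIMSEQ_n_over_Suc_n)
  then have "z \<longlonglongrightarrow> complex_of_real t + \<i> * complex_of_real \<beta>"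
    unfolding z_def by (intro tendsto_intros) (simp add: tendsto_of_real_iff)
  from continuous_on_tendsto_compose[OF contF this]
  have "(\<lambda>n. F (z n)) \<longlonglongrightarrow> F (complex_of_real t + \<i> * complex_of_real \<beta>)"
    using z_strip b by auto
  then show ?thesis using Fz LIMSEQ_unique by (simp add: LIMSEQ_const_iff)
qed

section \<open>States on unital C*-algebras\<close>

locale unital_cstar =
  fixes sm :: "complex \<Rightarrow> 'a::{real_normed_algebra_1,banach} \<Rightarrow> 'a" and st :: "'a \<Rightarrow> 'a"
  assumes cstar: "cstar_algebra sm st"
begin

lemma sm_times_left: "sm c (x * y) = sm c x * y"
  using cstar unfolding cstar_algebra_def by blast
lemma sm_times_right: "sm c (x * y) = x * sm c y"
  using cstar unfolding cstar_algebra_def by blast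
lemma st_st [simp]: "st (st x) = x"
  using cstar by (simp add: cstar_algebra_def)
lemma st_add: "st (x + y) = st x + st y"
  using cstar by (simp add: cstar_algebra_def)
lemma st_mult: "st (x * y) = st y * st x"
  using cstar by (simp add: cstar_algebra_def)
lemma st_sm: "st (sm c x) = sm (cnj c) (st x)"
  using cstar by (simp add: cstar_algebra_def)

lemma sm_eq_mult: "sm c x = sm c 1 * x"
  using sm_times_left[of c 1 x] by simp
lemma sm_one_central: "sm c 1 * x = x * sm c 1"
  using sm_eq_mult[of c x] sm_times_right[of c x 1] by simp
lemma mult_sm_one_left_commute: "x * (sm c 1 * y) = sm c 1 * (x * y)"
  by (metis mult.assoc sm_one_central)
lemma sm_one_one [simp]: "sm 1 1 = 1"
  using cstar unfolding cstar_algebra_def by (metis of_real_1 scaleR_one)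
lemma st_diff: "st (x - y) = st x - st y"
  using st_add[of "x - y" y] by (simp add: eq_diff_eq)
lemma st_sm_one: "st (sm c 1) = sm (cnj c) 1"
proof -
  have "st 1 = st 1 * st (st 1)" by simp
  also have "\<dots> = st (st 1 * 1)" by (simp only: st_mult)
  finally have "st 1 = 1" by simp
  then show ?thesis using st_sm[of c 1] by simp
qed

end

locale cstar_state = unital_cstar +
  fixes \<phi> :: "'a::{real_normed_algebra_1,banach} \<Rightarrow> complex"
  assumes state: "is_state sm st \<phi>"
begin

lemma state_add: "\<phi> (x + y) = \<phi> x + \<phi> y"
  using state by (simp add: is_state_def)
lemma state_Im_positive: "Im (\<phi> (st x * x)) = 0"
  using state by (simp add: is_state_def)
lemma state_Re_positive: "Re (\<phi> (st x * x)) \<ge> 0"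
  using state by (simp add: is_state_def)
lemma state_zero [simp]: "\<phi> 0 = 0"
  using state_add[of 0 0] by simp
lemma state_one: "\<phi> 1 = 1"
  using state by (simp add: is_state_def)
lemma state_sm_one: "\<phi> (sm c 1 * x) = c * \<phi> x"
  using state unfolding is_state_def by (metis sm_eq_mult)
lemma state_diff: "\<phi> (x - y) = \<phi> x - \<phi> y"
  using state_add[of "x - y" y] by (simp add: eq_diff_eq)

definition form :: "'a \<Rightarrow> 'a \<Rightarrow> complex"
  where "form x y = \<phi> (st x * y)"

lemma form_add_left: "form (x + y) z = form x z + form y z"
  unfolding form_def st_add distrib_right by (rule state_add)
lemma form_add_right: "form x (y + z) = form x y + form x z"
  unfolding form_def distrib_left by (rule state_add)
lemma form_diff_left: "form (x - y) z = form x z - form y z"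
  unfolding form_def st_diff left_diff_distrib by (rule state_diff)
lemma form_diff_right: "form x (y - z) = form x y - form x z"
  unfolding form_def right_diff_distrib by (rule state_diff)
lemma form_sm_left: "form (sm c 1 * x) y = cnj c * form x y"
  unfolding form_def st_mult st_sm_one mult.assoc mult_sm_one_left_commute by (rule state_sm_one)
lemma form_sm_right: "form x (sm c 1 * y) = c * form x y"
  unfolding form_def mult_sm_one_left_commute by (rule state_sm_one)

text \<open>Hermitian symmetry follows from positivity by polarisation with \<open>x + y\<close> and \<open>x + i y\<close>.\<close>
lemma form_cnj: "form y x = cnj (form x y)"
proof -
  have diag: "Im (form (x + y) (x + y)) = 0" "Im (form x x) = 0" "Im (form y y) = 0"
    using state_Im_positive by (auto simp: form_def)
  then have sum: "Im (form x y + form y x) = 0"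
    by (simp add: form_add_left form_add_right)
  have "Im (form (x + sm \<i> 1 * y) (x + sm \<i> 1 * y)) = 0" "Im (form (sm \<i> 1 * y) (sm \<i> 1 * y)) = 0"
    using state_Im_positive by (auto simp: form_def)
  then have "Im (\<i> * form x y - \<i> * form y x) = 0"
    using diag by (simp add: form_add_left form_add_right form_sm_left form_sm_right)
  with sum show ?thesis by (intro complex_eqI) auto
qed

end

lemma quadratic_nonneg_imp_le_mult:
  fixes a b w :: real
  assumes a: "a \<ge> 0" and b: "b \<ge> 0" and w: "w \<ge> 0"
    and nonneg: "\<And>t. 0 \<le> a - 2 * t * w + t^2 * w * b"
  shows "w \<le> a * b"
proof (cases "b = 0")
  case True
  show ?thesis
  proof (rule ccontr)
    assume "\<not> ?thesis"
    then have "w > 0" using True by simp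
    then have "2 * ((a + 1) / (2 * w)) * w = a + 1" by simp
    with nonneg[of "(a + 1) / (2 * w)"] True show False by simp
  qed
next
  case False
  then have bp: "b > 0" using b by simp
  have "(1 / b)^2 * w * b = w / b" using bp by (simp add: power2_eq_square)
  then have "w / b \<le> a" using nonneg[of "1 / b"] by simp
  then show ?thesis using bp by (simp add: divide_le_eq mult.commute)
qed

context cstar_state
begin

lemma form_Cauchy_Schwarz: "(cmod (form y x))^2 \<le> Re (form x x) * Re (form y y)"
proof -
  define w where "w = form y x"
  have form_xy: "form x y = cnj w" unfolding w_def by (rule form_cnj)
  have diag: "Im (form x x) = 0" "Re (form x x) \<ge> 0" "Im (form y y) = 0" "Re (form y y) \<ge> 0"
    using state_Im_positive state_Re_positive by (auto simp: form_def)
  have w_cnj: "w * cnj w = complex_of_real ((cmod w)^2)" "cnj w * w = complex_of_real ((cmod w)^2)"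
    by (simp_all add: complex_norm_square[symmetric] mult.commute)
  have "0 \<le> Re (form x x) - 2 * t * (cmod w)^2 + t^2 * (cmod w)^2 * Re (form y y)" for t :: real
  proof -
    define u where "u = complex_of_real t * w"
    define z where "z = x - sm u 1 * y"
    have cnj_u: "cnj u = complex_of_real t * cnj w" by (simp add: u_def)
    have uw: "u * form x y = complex_of_real (t * (cmod w)^2)"
      unfolding form_xy u_def by (simp only: mult.assoc w_cnj of_real_mult)
    have uw': "cnj u * form y x = complex_of_real (t * (cmod w)^2)"
      unfolding cnj_u w_def[symmetric] by (simp only: mult.assoc w_cnj of_real_mult)
    have uu: "u * (cnj u * form y y) = complex_of_real (t^2 * (cmod w)^2) * form y y"
    proof -
      have "u * cnj u = complex_of_real (t^2 * (cmod w)^2)"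
        unfolding cnj_u u_def using w_cnj by (simp add: power2_eq_square algebra_simps)
      then show ?thesis by (simp add: mult.assoc[symmetric])
    qed
    have "form z z = form x x - form (sm u 1 * y) x - (form x (sm u 1 * y) - form (sm u 1 * y) (sm u 1 * y))"
      unfolding z_def by (simp only: form_diff_left form_diff_right)
    also have "\<dots> = form x x - complex_of_real (t * (cmod w)^2)
        - (complex_of_real (t * (cmod w)^2) - complex_of_real (t^2 * (cmod w)^2) * form y y)"
      unfolding form_sm_left form_sm_right uw uw' uu[symmetric] ..
    finally have "Re (form z z) = Re (form x x) - 2 * t * (cmod w)^2 + t^2 * (cmod w)^2 * Re (form y y)"
      using diag by simp
    moreover have "Re (form z z) \<ge> 0" using state_Re_positive by (simp add: form_def)
    ultimately show ?thesis by simp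
  qed
  then show ?thesis unfolding w_def[symmetric]
    by (intro quadratic_nonneg_imp_le_mult diag) simp_all
qed

lemma state_Cauchy_Schwarz: "(cmod (\<phi> (a * b)))^2 \<le> Re (\<phi> (a * st a)) * Re (\<phi> (st b * b))"
  using form_Cauchy_Schwarz[of "st a" b] unfolding form_def st_st by (simp only: mult.commute)

end

section \<open>Trigonometric polynomials are dense in \<open>C(\<bbbS>\<^sup>d)\<close>\<close>

lemma Csd_add: "f \<in> Csd \<Longrightarrow> g \<in> Csd \<Longrightarrow> (\<lambda>x. f x + g x) \<in> Csd"
  by (auto simp: Csd_def intro!: continuous_intros)
lemma Csd_diff: "f \<in> Csd \<Longrightarrow> g \<in> Csd \<Longrightarrow> (\<lambda>x. f x - g x) \<in> Csd"
  by (auto simp: Csd_def intro!: continuous_intros)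
lemma Csd_mult: "f \<in> Csd \<Longrightarrow> g \<in> Csd \<Longrightarrow> (\<lambda>x. f x * g x) \<in> Csd"
  by (auto simp: Csd_def intro!: continuous_intros)
lemma Csd_cnj: "f \<in> Csd \<Longrightarrow> (\<lambda>x. cnj (f x)) \<in> Csd"
  by (auto simp: Csd_def intro!: continuous_intros)
lemma Csd_const: "(\<lambda>x. c) \<in> Csd"
  by (auto simp: Csd_def)

lemma Csd_shift:
  assumes "f \<in> Csd"
  shows "(\<lambda>x. f (x + y)) \<in> Csd"
proof -
  have cont: "continuous_on UNIV f" and per: "\<And>x n. f (x + (\<chi> j. real_of_int (n$j))) = f x"
    using assms by (auto simp: Csd_def)
  have "continuous_on UNIV (\<lambda>x. f (x + y))"
    by (rule continuous_on_compose2[OF cont]) (auto intro!: continuous_intros)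
  moreover have "f (x + (\<chi> j. real_of_int (n$j)) + y) = f (x + y)" for x n
    using per[of "x + y" n] by (simp add: ac_simps)
  ultimately show ?thesis by (simp add: Csd_def)
qed

lemma Csd_sqrt_diff_norm_square:
  assumes "h \<in> Csd"
  shows "(\<lambda>x. complex_of_real (sqrt (M - (cmod (h x))^2))) \<in> Csd"
proof -
  have cont: "continuous_on UNIV h" and per: "\<And>x n. h (x + (\<chi> j. real_of_int (n$j))) = h x"
    using assms by (auto simp: Csd_def)
  have "continuous_on UNIV (\<lambda>x. complex_of_real (sqrt (M - (cmod (h x))^2)))"
    by (intro continuous_intros cont)
  then show ?thesis using per by (simp add: Csd_def)
qed

lemma gchar_mult: "gchar n x * gchar m x = gchar (n + m) x"
proof -
  have "(\<Sum>j\<in>UNIV. x$j * real_of_int ((n + m)$j))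
      = (\<Sum>j\<in>UNIV. x$j * real_of_int (n$j)) + (\<Sum>j\<in>UNIV. x$j * real_of_int (m$j))"
    by (simp add: sum.distrib distrib_left)
  then show ?thesis unfolding gchar_def by (simp add: exp_add[symmetric] distrib_left)
qed

lemma gchar_zero: "gchar 0 x = 1"
  by (simp add: gchar_def)

lemma gchar_axis: "gchar (axis i c) x = exp (\<i> * complex_of_real (2 * pi * x$i * of_int c))"
proof -
  have "(\<Sum>j\<in>UNIV. x$j * real_of_int (axis i c $ j)) = x$i * of_int c"
    by (simp add: axis_def if_distrib cong: if_cong)
  then show ?thesis unfolding gchar_def by (simp add: mult_ac)
qed

lemma exp_two_pi_i_int: "exp (2 * pi * \<i> * of_int k) = 1"
proof -
  have "real_of_int k \<in> \<int>" by simp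
  from exp_integer_2pi[OF this] show ?thesis by (simp add: mult_ac)
qed

lemma Csd_gchar: "gchar n \<in> Csd"
proof -
  have "continuous_on UNIV (gchar n)" unfolding gchar_def by (intro continuous_intros)
  moreover have "gchar n (x + (\<chi> j. real_of_int (m$j))) = gchar n x" for x m
  proof -
    have "(\<Sum>j\<in>UNIV. (x + (\<chi> j. real_of_int (m$j)))$j * real_of_int (n$j))
        = (\<Sum>j\<in>UNIV. x$j * real_of_int (n$j)) + real_of_int (\<Sum>j\<in>UNIV. m$j * n$j)"
      by (simp add: sum.distrib distrib_right)
    then have "gchar n (x + (\<chi> j. real_of_int (m$j)))
        = gchar n x * exp (2 * pi * \<i> * of_int (\<Sum>j\<in>UNIV. m$j * n$j))"
      unfolding gchar_def by (simp add: exp_add[symmetric] distrib_left)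
    moreover have "exp (2 * pi * \<i> * of_int (\<Sum>j\<in>UNIV. m$j * n$j)) = 1"
      by (rule exp_two_pi_i_int)
    ultimately show ?thesis by simp
  qed
  ultimately show ?thesis by (simp add: Csd_def)
qed

inductive_set trig_poly :: "(real^'d \<Rightarrow> complex) set" where
  trig_poly_gchar: "gchar n \<in> trig_poly"
| trig_poly_add: "t \<in> trig_poly \<Longrightarrow> s \<in> trig_poly \<Longrightarrow> (\<lambda>x. t x + s x) \<in> trig_poly"
| trig_poly_scale: "t \<in> trig_poly \<Longrightarrow> (\<lambda>x. c * t x) \<in> trig_poly"

lemma trig_poly_const: "(\<lambda>x. c) \<in> trig_poly"
  using trig_poly_scale[OF trig_poly_gchar[of 0], of c] by (simp add: gchar_zero)

lemma trig_poly_mult_gchar: "t \<in> trig_poly \<Longrightarrow> (\<lambda>x. t x * gchar m x) \<in> trig_poly"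
proof (induction rule: trig_poly.induct)
  case (trig_poly_gchar n)
  then show ?case by (simp add: gchar_mult trig_poly.trig_poly_gchar)
next
  case (trig_poly_add t s)
  then show ?case by (simp add: distrib_right trig_poly.trig_poly_add)
next
  case (trig_poly_scale t c)
  then show ?case using trig_poly.trig_poly_scale[of "\<lambda>x. t x * gchar m x" c] by (simp add: mult.assoc)
qed

lemma trig_poly_mult: "s \<in> trig_poly \<Longrightarrow> t \<in> trig_poly \<Longrightarrow> (\<lambda>x. t x * s x) \<in> trig_poly"
proof (induction rule: trig_poly.induct)
  case (trig_poly_gchar n)
  then show ?case by (rule trig_poly_mult_gchar)
next
  case (trig_poly_add s1 s2)
  then show ?case by (simp add: distrib_left trig_poly.trig_poly_add)
next
  case (trig_poly_scale s c)
  then show ?case using trig_poly.trig_poly_scale[of "\<lambda>x. t x * s x" c] by (simp add: ac_simps)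
qed

lemma trig_poly_sum:
  "finite S \<Longrightarrow> (\<And>i. i \<in> S \<Longrightarrow> f i \<in> trig_poly) \<Longrightarrow> (\<lambda>x. \<Sum>i\<in>S. f i x) \<in> trig_poly"
  by (induction S rule: finite_induct) (simp_all add: trig_poly_const trig_poly_add)

lemma trig_poly_Csd: "t \<in> trig_poly \<Longrightarrow> t \<in> Csd"
  by (induction rule: trig_poly.induct)
    (auto simp: Csd_gchar Csd_add Csd_mult[OF Csd_const])

text \<open>The quotient map \<open>\<real>\<^sup>d \<rightarrow> \<bbbS>\<^sup>d\<close>, realised on the compact torus inside \<open>\<complex>\<^sup>d\<close>.\<close>
definition torus :: "real^'d \<Rightarrow> complex^'d"
  where "torus x = (\<chi> j. exp (\<i> * complex_of_real (2 * pi * x$j)))"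

lemma continuous_on_torus: "continuous_on S torus"
  unfolding torus_def by (intro continuous_intros)

lemma trig_poly_torus_inner_Basis:
  assumes "b \<in> (Basis :: (complex^'d) set)"
  shows "(\<lambda>x. complex_of_real (torus x \<bullet> b)) \<in> trig_poly"
proof -
  obtain i u where b: "b = axis i u" and u: "u = 1 \<or> u = \<i>"
    using assms unfolding Basis_vec_def by (auto simp: Basis_complex_def)
  have cos: "complex_of_real (cos (2 * pi * x$i))
      = (1/2) * gchar (axis i 1) x + (1/2) * gchar (axis i (-1)) x" for x
    unfolding gchar_axis cos_of_real[symmetric] cos_exp_eq by (simp add: field_simps)
  have sin: "complex_of_real (sin (2 * pi * x$i))
      = (1/(2*\<i>)) * gchar (axis i 1) x + (-1/(2*\<i>)) * gchar (axis i (-1)) x" for x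
    unfolding gchar_axis sin_of_real[symmetric] sin_exp_eq by (simp add: field_simps)
  from u show ?thesis
  proof
    assume "u = 1"
    then have "torus x \<bullet> b = cos (2 * pi * x$i)" for x
      by (simp add: b inner_axis torus_def Re_exp)
    then have "(\<lambda>x. complex_of_real (torus x \<bullet> b))
        = (\<lambda>x. (1/2) * gchar (axis i 1) x + (1/2) * gchar (axis i (-1)) x)"
      using cos by auto
    then show ?thesis by (simp only:) (intro trig_poly_add trig_poly_scale trig_poly_gchar)
  next
    assume "u = \<i>"
    then have "torus x \<bullet> b = sin (2 * pi * x$i)" for x
      by (simp add: b inner_axis torus_def Im_exp)
    then have "(\<lambda>x. complex_of_real (torus x \<bullet> b))
        = (\<lambda>x. (1/(2*\<i>)) * gchar (axis i 1) x + (-1/(2*\<i>)) * gchar (axis i (-1)) x)"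
      using sin by auto
    then show ?thesis by (simp only:) (intro trig_poly_add trig_poly_scale trig_poly_gchar)
  qed
qed

lemma real_polynomial_function_torus_trig_poly:
  fixes g :: "complex^'d \<Rightarrow> real"
  assumes "real_polynomial_function g"
  shows "(\<lambda>x. complex_of_real (g (torus x))) \<in> trig_poly"
  using assms
proof (induction rule: real_polynomial_function.induct)
  case (linear g)
  then have lin: "linear g" by (rule bounded_linear.linear)
  have expand: "g z = (\<Sum>b\<in>Basis. (z \<bullet> b) * g b)" for z
  proof -
    have "g z = g (\<Sum>b\<in>Basis. (z \<bullet> b) *\<^sub>R b)" by (simp add: euclidean_representation)
    also have "\<dots> = (\<Sum>b\<in>Basis. (z \<bullet> b) * g b)"
      by (simp add: linear_sum[OF lin] linear_scale[OF lin])
    finally show ?thesis .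
  qed
  have "complex_of_real (g (torus x))
      = (\<Sum>b\<in>Basis. complex_of_real (g b) * complex_of_real (torus x \<bullet> b))" for x
    unfolding expand[of "torus x"] of_real_sum of_real_mult by (simp only: mult.commute)
  then show ?case
    by (simp only:) (intro trig_poly_sum trig_poly_scale trig_poly_torus_inner_Basis; simp)
next
  case (const c)
  then show ?case by (rule trig_poly_const)
next
  case (add f g)
  then show ?case by (simp add: trig_poly_add)
next
  case (mult f g)
  then show ?case by (simp add: trig_poly_mult)
qed

lemma polynomial_function_torus_trig_poly:
  fixes g :: "complex^'d \<Rightarrow> complex"
  assumes "polynomial_function g"
  shows "(\<lambda>x. g (torus x)) \<in> trig_poly"
proof -
  have "real_polynomial_function (Re \<circ> g)" "real_polynomial_function (Im \<circ> g)"
    using assms bounded_linear_Re bounded_linear_Im unfolding polynomial_function_def by blast+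
  then have "(\<lambda>x. complex_of_real (Re (g (torus x))) + \<i> * complex_of_real (Im (g (torus x)))) \<in> trig_poly"
    by (intro trig_poly_add trig_poly_scale)
      (auto simp: o_def dest: real_polynomial_function_torus_trig_poly)
  then show ?thesis by (simp add: complex_eq[symmetric])
qed

lemma exp_2pi_eq_iff:
  "exp (\<i> * complex_of_real (2 * pi * a)) = exp (\<i> * complex_of_real (2 * pi * b))
     \<longleftrightarrow> (\<exists>n::int. a = b + of_int n)"
proof
  assume "exp (\<i> * complex_of_real (2 * pi * a)) = exp (\<i> * complex_of_real (2 * pi * b))"
  then obtain n :: int
    where "\<i> * complex_of_real (2 * pi * a) = \<i> * complex_of_real (2 * pi * b) + (of_int (2 * n) * pi) * \<i>"
    unfolding exp_eq by blast
  then have "Im (\<i> * complex_of_real (2 * pi * a)) = Im (\<i> * complex_of_real (2 * pi * b) + (of_int (2 * n) * pi) * \<i>)"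
    by simp
  then have "(2 * pi) * a = (2 * pi) * (b + of_int n)" by (simp add: algebra_simps)
  then show "\<exists>n::int. a = b + of_int n" by auto
next
  assume "\<exists>n::int. a = b + of_int n"
  then obtain n :: int where "a = b + of_int n" by blast
  then show "exp (\<i> * complex_of_real (2 * pi * a)) = exp (\<i> * complex_of_real (2 * pi * b))"
    unfolding exp_eq by (intro exI[of _ n]) (simp add: algebra_simps)
qed

lemma torus_eq_imp_Csd_eq:
  assumes f: "f \<in> Csd" and eq: "torus x = torus y"
  shows "f x = f y"
proof -
  have "\<exists>n::int. x$j = y$j + of_int n" for j
    using eq exp_2pi_eq_iff[of "x$j" "y$j"] unfolding torus_def vec_eq_iff by simp
  then obtain N where "\<And>j. x$j = y$j + of_int (N j)" by metis
  then have "x = y + (\<chi> j. real_of_int ((\<chi> j. N j) $ j))" by (simp add: vec_eq_iff)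
  moreover have "f (y + (\<chi> j. real_of_int (n $ j))) = f y" for n using f by (simp add: Csd_def)
  ultimately show ?thesis by metis
qed

lemma range_torus: "range torus = torus ` cbox 0 1"
proof -
  have "torus x $ j = torus (\<chi> j. frac (x$j)) $ j" for x :: "real^'d" and j
    using exp_2pi_eq_iff[of "x$j" "frac (x$j)"] unfolding torus_def by (simp add: frac_def)
  then have "torus x = torus (\<chi> j. frac (x$j))" for x :: "real^'d"
    unfolding vec_eq_iff by blast
  moreover have "(\<chi> j. frac (x$j)) \<in> cbox 0 1" for x :: "real^'d"
    by (simp add: mem_box_cart frac_ge_0 less_imp_le[OF frac_lt_1])
  ultimately show ?thesis by blast
qed

lemma compact_range_torus: "compact (range torus)"
  unfolding range_torus by (intro compact_continuous_image continuous_on_torus compact_cbox)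

text \<open>Every \<open>f \<in> C(\<bbbS>\<^sup>d)\<close> factors continuously through \<open>torus\<close>; continuity of the factor
  holds because \<open>torus\<close> restricted to the compact cube \<open>[0,1]\<^sup>d\<close> is a quotient map.\<close>
lemma Csd_factors_through_torus:
  fixes f :: "real^'d \<Rightarrow> complex"
  assumes f: "f \<in> Csd"
  obtains F where "\<And>x. F (torus x) = f x" and "continuous_on (range torus) F"
proof
  define F where "F z = f (SOME x. torus x = z)" for z
  show F_torus: "F (torus x) = f x" for x
    unfolding F_def by (rule torus_eq_imp_Csd_eq[OF f someI[of _ x]]) simp
  define K where "K = cbox (0::real^'d) 1"
  define T where "T = torus ` K"
  have T: "range torus = T" unfolding T_def K_def by (rule range_torus)
  have q: "quotient_map (top_of_set K) (top_of_set T) torus"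
  proof (rule continuous_closed_imp_quotient_map)
    show cm: "continuous_map (top_of_set K) (top_of_set T) torus"
      by (auto simp: continuous_map_in_subtopology T_def continuous_on_torus)
    show "closed_map (top_of_set K) (top_of_set T) torus"
    proof (rule continuous_imp_closed_map[OF cm])
      show "compact_space (top_of_set K)"
        by (simp add: K_def compact_space_subtopology compactin_euclidean_iff)
      show "Hausdorff_space (top_of_set T)" by (simp add: Hausdorff_space_subtopology)
    qed
    show "torus ` topspace (top_of_set K) = topspace (top_of_set T)" by (simp add: T_def)
  qed
  have "F \<circ> torus = f" using F_torus by (simp add: fun_eq_iff)
  moreover have "continuous_on K f" using f continuous_on_subset by (auto simp: Csd_def)
  ultimately have "continuous_map (top_of_set K) euclidean (F \<circ> torus)" by simp
  from continuous_compose_quotient_map[OF q this]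
  show "continuous_on (range torus) F" unfolding T by simp
qed

lemma Csd_bounded:
  assumes "f \<in> Csd"
  obtains M where "\<And>x. cmod (f x) \<le> M"
proof -
  obtain F where F: "\<And>x. F (torus x) = f x" "continuous_on (range torus) F"
    using Csd_factors_through_torus[OF assms] by blast
  have "bounded (F ` range torus)"
    by (intro compact_imp_bounded compact_continuous_image F(2) compact_range_torus)
  then obtain M where "\<And>x. cmod (F (torus x)) \<le> M" unfolding bounded_iff by blast
  then show ?thesis using F(1) that by metis
qed

lemma trig_poly_dense:
  assumes f: "f \<in> Csd" and e: "e > 0"
  obtains t where "t \<in> trig_poly" and "\<And>x. cmod (f x - t x) \<le> e"
proof -
  obtain F where F: "\<And>x. F (torus x) = f x" "continuous_on (range torus) F"
    using Csd_factors_through_torus[OF f] by blast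
  obtain g where g: "polynomial_function g" and "\<forall>z\<in>range torus. norm (F z - g z) < e"
    using Stone_Weierstrass_polynomial_function[OF compact_range_torus F(2) e] by blast
  then have "cmod (f x - g (torus x)) \<le> e" for x using F(1)[of x] by (metis less_imp_le rangeI)
  with polynomial_function_torus_trig_poly[OF g] that show ?thesis by blast
qed

lemma Csd_functional_eq_zero:
  fixes D :: "(real^'d \<Rightarrow> complex) \<Rightarrow> complex"
  assumes D_add: "\<And>f g. f \<in> Csd \<Longrightarrow> g \<in> Csd \<Longrightarrow> D (\<lambda>x. f x + g x) = D f + D g"
    and D_scale: "\<And>f c. f \<in> Csd \<Longrightarrow> D (\<lambda>x. c * f x) = c * D f"
    and D_gchar: "\<And>n. D (gchar n) = 0"
    and D_bound: "\<And>h M. h \<in> Csd \<Longrightarrow> (\<And>x. cmod (h x) \<le> M) \<Longrightarrow> cmod (D h) \<le> C * M"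
    and f: "f \<in> Csd"
  shows "D f = 0"
proof -
  have D_trig_poly: "t \<in> trig_poly \<Longrightarrow> D t = 0" for t
    by (induction rule: trig_poly.induct) (simp_all add: D_gchar D_add D_scale trig_poly_Csd)
  have "cmod (D f) \<le> 0 + e" if e: "e > 0" for e
  proof -
    define e' where "e' = e / (\<bar>C\<bar> + 1)"
    have e': "e' > 0" using e by (simp add: e'_def add_pos_nonneg)
    have "C * e' \<le> (\<bar>C\<bar> + 1) * e'" using e' by (intro mult_right_mono) simp_all
    also have "\<dots> = e" unfolding e'_def by (simp add: add_pos_nonneg)
    finally have "C * e' \<le> e" .
    obtain t where t: "t \<in> trig_poly" and close: "\<And>x. cmod (f x - t x) \<le> e'"
      using trig_poly_dense[OF f e'] by blast
    have tc: "t \<in> Csd" by (rule trig_poly_Csd[OF t])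
    have "D f = D (\<lambda>x. (f x - t x) + t x)" by simp
    also have "\<dots> = D (\<lambda>x. f x - t x)"
      using D_add[OF Csd_diff[OF f tc] tc] D_trig_poly[OF t] by simp
    finally show ?thesis using D_bound[OF Csd_diff[OF f tc] close] \<open>C * e' \<le> e\<close> by simp
  qed
  then show ?thesis using field_le_epsilon[of "cmod (D f)" 0] by simp
qed

section \<open>KMS states of \<open>B\<^sub>\<theta>\<close>\<close>

lemma (in cstar_state) kms_eigenvector_twisted_trace:
  assumes kms: "is_KMS \<beta> \<alpha> \<phi>" and beta_pos: "\<beta> > 0"
    and eigen: "\<And>t. \<alpha> t b = sm (exp (\<i> * complex_of_real (t * c))) 1 * b"
  shows "\<phi> (b * a) = exp (- complex_of_real (\<beta> * c)) * \<phi> (a * b)"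
proof -
  obtain F where contF: "continuous_on {z. 0 \<le> Im z \<and> Im z \<le> \<beta>} F"
    and holF: "F holomorphic_on {z. 0 < Im z \<and> Im z < \<beta>}"
    and F_real: "\<And>t. F (complex_of_real t) = \<phi> (a * \<alpha> t b)"
    and F_upper: "\<And>t. F (complex_of_real t + \<i> * complex_of_real \<beta>) = \<phi> (\<alpha> t b * a)"
    using kms unfolding is_KMS_def by blast
  define G where "G z = F z - exp (\<i> * z * complex_of_real c) * \<phi> (a * b)" for z
  have "G (complex_of_real 0 + \<i> * complex_of_real \<beta>) = 0"
  proof (rule strip_function_vanishes_on_upper_edge[OF beta_pos])
    show "continuous_on {z. 0 \<le> Im z \<and> Im z \<le> \<beta>} G"
      unfolding G_def by (intro continuous_intros contF)
    show "G holomorphic_on {z. 0 < Im z \<and> Im z < \<beta>}"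
      unfolding G_def by (intro holomorphic_intros holF)
    show "G (complex_of_real t) = 0" for t
      unfolding G_def F_real eigen mult_sm_one_left_commute state_sm_one by (simp add: mult_ac)
  qed
  moreover have "F (complex_of_real 0 + \<i> * complex_of_real \<beta>) = \<phi> (b * a)"
    unfolding F_upper eigen by simp
  ultimately show ?thesis unfolding G_def by (simp add: mult_ac)
qed

locale iota_state = cstar_state sm st \<phi> for sm st \<phi> +
  fixes U :: "int^'d \<Rightarrow> 'a" and \<iota> :: "(real^'d \<Rightarrow> complex) \<Rightarrow> 'a"
  assumes iota: "is_iota sm st U \<iota>"
begin

lemma iota_add: "f \<in> Csd \<Longrightarrow> g \<in> Csd \<Longrightarrow> \<iota> (\<lambda>x. f x + g x) = \<iota> f + \<iota> g"
  using iota by (simp add: is_iota_def)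
lemma iota_mult: "f \<in> Csd \<Longrightarrow> g \<in> Csd \<Longrightarrow> \<iota> (\<lambda>x. f x * g x) = \<iota> f * \<iota> g"
  using iota by (simp add: is_iota_def)
lemma iota_scale: "f \<in> Csd \<Longrightarrow> \<iota> (\<lambda>x. c * f x) = sm c 1 * \<iota> f"
  using iota unfolding is_iota_def by (metis sm_eq_mult)
lemma iota_cnj: "f \<in> Csd \<Longrightarrow> \<iota> (\<lambda>x. cnj (f x)) = st (\<iota> f)"
  using iota by (simp add: is_iota_def)
lemma iota_gchar: "\<iota> (gchar n) = U n"
  using iota by (simp add: is_iota_def)
lemma iota_const: "\<iota> (\<lambda>x. c) = sm c 1"
  using iota_scale[OF Csd_const, of c 1] iota by (simp add: is_iota_def)

text \<open>\<open>\<iota>(|h|\<^sup>2) \<le> M\<^sup>2\<close> as operators: the difference is \<open>\<iota>(k)\<^sup>*\<iota>(k)\<close> with \<open>k = \<surd>(M\<^sup>2 - |h|\<^sup>2)\<close>.\<close>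
lemma state_iota_square_le:
  assumes h: "h \<in> Csd" and M: "\<And>x. cmod (h x) \<le> M"
  shows "Re (\<phi> (st (\<iota> h * B) * (\<iota> h * B))) \<le> M^2 * Re (\<phi> (st B * B))"
proof -
  define k where "k = (\<lambda>x. complex_of_real (sqrt (M^2 - (cmod (h x))^2)))"
  have k: "k \<in> Csd" unfolding k_def by (rule Csd_sqrt_diff_norm_square[OF h])
  have pointwise: "cnj (h x) * h x + cnj (k x) * k x = complex_of_real (M^2)" for x
  proof -
    have "(cmod (h x))^2 \<le> M^2" using M[of x] by (simp add: power_mono)
    then have "cnj (k x) * k x = complex_of_real (M^2 - (cmod (h x))^2)"
      unfolding k_def by (simp flip: of_real_mult)
    moreover have "cnj (h x) * h x = complex_of_real ((cmod (h x))^2)"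
      using complex_norm_square[of "h x"] by (simp add: mult.commute)
    ultimately show ?thesis by simp
  qed
  have "sm (complex_of_real (M^2)) 1 = \<iota> (\<lambda>x. cnj (h x) * h x + cnj (k x) * k x)"
    unfolding pointwise iota_const ..
  also have "\<dots> = st (\<iota> h) * \<iota> h + st (\<iota> k) * \<iota> k"
    using h k by (simp add: iota_add iota_mult iota_cnj Csd_mult Csd_cnj)
  finally have hh: "st (\<iota> h) * \<iota> h = sm (complex_of_real (M^2)) 1 - st (\<iota> k) * \<iota> k"
    by (simp add: algebra_simps)
  have "st (\<iota> h * B) * (\<iota> h * B) = st B * (st (\<iota> h) * \<iota> h) * B"
    by (simp add: st_mult mult.assoc)
  also have "\<dots> = sm (complex_of_real (M^2)) 1 * (st B * B) - st (\<iota> k * B) * (\<iota> k * B)"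
    unfolding hh by (simp add: st_mult algebra_simps mult_sm_one_left_commute)
  finally have "st (\<iota> h * B) * (\<iota> h * B)
      = sm (complex_of_real (M^2)) 1 * (st B * B) - st (\<iota> k * B) * (\<iota> k * B)" .
  then have "Re (\<phi> (st (\<iota> h * B) * (\<iota> h * B)))
      = M^2 * Re (\<phi> (st B * B)) - Re (\<phi> (st (\<iota> k * B) * (\<iota> k * B)))"
    by (simp add: state_diff state_sm_one)
  with state_Re_positive[of "\<iota> k * B"] show ?thesis by simp
qed

lemma state_iota_bound:
  assumes h: "h \<in> Csd" and M: "\<And>x. cmod (h x) \<le> M"
  shows "cmod (\<phi> (X * \<iota> h * st Y)) \<le> M * sqrt (Re (\<phi> (X * st X)) * Re (\<phi> (Y * st Y)))"
proof -
  define A where "A = Re (\<phi> (X * st X)) * Re (\<phi> (Y * st Y))"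
  have A: "A \<ge> 0" unfolding A_def using state_Re_positive[of "st X"] state_Re_positive[of "st Y"] by simp
  have M0: "M \<ge> 0" using M[of undefined] norm_ge_zero order_trans by blast
  have "(cmod (\<phi> (X * (\<iota> h * st Y))))^2 \<le> Re (\<phi> (X * st X)) * Re (\<phi> (st (\<iota> h * st Y) * (\<iota> h * st Y)))"
    by (rule state_Cauchy_Schwarz)
  also have "\<dots> \<le> Re (\<phi> (X * st X)) * (M^2 * Re (\<phi> (Y * st Y)))"
    using state_iota_square_le[OF h M, of "st Y"] state_Re_positive[of "st X"] by (simp add: mult_left_mono)
  also have "\<dots> = (M * sqrt A)^2" using A by (simp add: A_def power_mult_distrib)
  finally have "(cmod (\<phi> (X * \<iota> h * st Y)))^2 \<le> (M * sqrt A)^2" by (simp only: mult.assoc)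
  then show ?thesis unfolding A_def[symmetric] by (rule power2_le_imp_le) (simp add: M0 A)
qed

end

definition nica_shift :: "nat^'k \<Rightarrow> nat^'k \<Rightarrow> nat^'k"
  where "nica_shift p q = (\<chi> i. vmax p q $ i - p $ i)"

lemma add_nica_shift: "p + nica_shift p q = vmax p q"
  by (simp add: vec_eq_iff vmax_def nica_shift_def)

lemma vmax_commute: "vmax p q = vmax q p"
  by (simp add: vmax_def vec_eq_iff max.commute)

lemma nica_shift_add_both: "nica_shift (p + c) (q + c) = nica_shift p q"
  by (simp add: vec_eq_iff vmax_def nica_shift_def max_def)

lemma dotr_iterate: "dotr (\<chi> i. p$i + l * P$i) r = dotr p r + real l * dotr P r"
  unfolding dotr_def by (simp add: sum.distrib sum_distrib_left algebra_simps)

text \<open>With \<open>r > 0\<close>, \<open>P = 0\<close> means \<open>q \<le> p\<close> componentwise, and then \<open>p\<^sup>Tr = q\<^sup>Tr\<close> forces \<open>p = q\<close>.\<close>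
lemma dotr_nica_shift_pos:
  fixes p q :: "nat^'k" and r :: "real^'k"
  assumes r: "\<forall>i. r$i > 0" and pq: "dotr p r = dotr q r" and ne: "p \<noteq> q"
  shows "dotr (nica_shift p q) r > 0"
proof -
  have "\<exists>i. nica_shift p q $ i > 0"
  proof (rule ccontr)
    assume "\<nexists>i. nica_shift p q $ i > 0"
    then have "\<not> p$i < max (p$i) (q$i)" for i by (auto simp: nica_shift_def vmax_def)
    then have le: "q$i \<le> p$i" for i by (meson max.cobounded2 not_less order_trans)
    have "(\<Sum>i\<in>UNIV. (real (p$i) - real (q$i)) * r$i) = dotr p r - dotr q r"
      unfolding dotr_def by (simp add: sum_subtractf left_diff_distrib)
    then have "(\<Sum>i\<in>UNIV. (real (p$i) - real (q$i)) * r$i) = 0" using pq by simp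
    moreover have "0 \<le> (real (p$i) - real (q$i)) * r$i" for i
      using le[of i] r[rule_format, of i] by (intro mult_nonneg_nonneg) simp_all
    ultimately have zero: "(real (p$i) - real (q$i)) * r$i = 0" for i
      using sum_nonneg_eq_0_iff[of UNIV "\<lambda>i. (real (p$i) - real (q$i)) * r$i"] by simp
    have "p$i = q$i" for i using zero[of i] r[rule_format, of i] by simp
    with ne show False by (simp add: vec_eq_iff)
  qed
  then obtain i where i: "nica_shift p q $ i > 0" by blast
  have "0 < real (nica_shift p q $ i) * r$i" using i r by simp
  also have "\<dots> \<le> dotr (nica_shift p q) r"
    unfolding dotr_def
    by (rule member_le_sum) (simp_all add: r less_imp_le[OF r[rule_format]])
  finally show ?thesis .
qed

lemma gchar_shift:
  "gchar n (x + thetaT \<theta> P) = exp (2 * pi * \<i> * complex_of_real (bil P \<theta> n)) * gchar n x"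
proof -
  have "(\<Sum>j\<in>UNIV. thetaT \<theta> P $ j * real_of_int (n$j))
      = (\<Sum>j\<in>UNIV. \<Sum>i\<in>UNIV. real (P$i) * (\<theta>$i$j) * real_of_int (n$j))"
    unfolding thetaT_def by (simp add: sum_distrib_right sum_distrib_left mult_ac)
  also have "\<dots> = bil P \<theta> n"
    unfolding bil_def by (rule sum.swap)
  finally have shifted: "(\<Sum>j\<in>UNIV. (x + thetaT \<theta> P) $ j * real_of_int (n$j))
      = (\<Sum>j\<in>UNIV. x $ j * real_of_int (n$j)) + bil P \<theta> n"
    by (simp add: distrib_right sum.distrib)
  show ?thesis unfolding gchar_def shifted of_real_add distrib_left exp_add by (simp add: mult_ac)
qed

locale Btheta_kms = iota_state sm st \<phi> U \<iota> for sm st \<phi> U \<iota> +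
  fixes \<theta> :: "real^'d^'k" and r :: "real^'k" and \<beta> :: real
    and \<alpha> :: "real \<Rightarrow> 'a \<Rightarrow> 'a" and V :: "nat^'k \<Rightarrow> 'a"
  assumes rel: "Btheta_relations sm st \<theta> U V"
    and dyn: "is_dynamics sm st \<alpha>"
    and dynV: "\<forall>t p. \<alpha> t (V p) = sm (exp (\<i> * complex_of_real (t * dotr p r))) (V p)"
    and kms: "is_KMS \<beta> \<alpha> \<phi>" and beta_pos: "\<beta> > 0"
begin

lemma V_add: "V (p + q) = V p * V q"
  using rel by (simp add: Btheta_relations_def)
lemma V_isometry: "st (V p) * V p = 1"
  using rel by (simp add: Btheta_relations_def)
lemma V_isometry_left: "st (V p) * (V p * x) = x"
  by (simp add: mult.assoc[symmetric] V_isometry)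
lemma V_Nica: "V p * st (V p) * (V q * st (V q)) = V (vmax p q) * st (V (vmax p q))"
  using rel by (simp add: Btheta_relations_def)
lemma U_add: "U (n + m) = U n * U m"
  using rel by (simp add: Btheta_relations_def)
lemma U_zero: "U 0 = 1"
  using rel by (simp add: Btheta_relations_def)
lemma U_unitary: "st (U n) * U n = 1"
  using rel by (simp add: Btheta_relations_def)
lemma U_V_commute: "U n * V p = sm (exp (2 * pi * \<i> * complex_of_real (bil p \<theta> n))) 1 * (V p * U n)"
  using rel sm_eq_mult unfolding Btheta_relations_def by metis

lemma st_U_uminus: "st (U (- n)) = U n"
proof -
  have "st (U (- n)) = st (U (- n)) * (U (- n) * U n)" by (simp add: U_add[symmetric] U_zero)
  also have "\<dots> = U n" by (simp add: mult.assoc[symmetric] U_unitary)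
  finally show ?thesis .
qed

lemma st_V_U_commute:
  "st (V P) * U n = sm (cnj (exp (2 * pi * \<i> * complex_of_real (bil P \<theta> (- n))))) 1 * (U n * st (V P))"
proof -
  define E where "E = exp (2 * pi * \<i> * complex_of_real (bil P \<theta> (- n)))"
  have "st (U (- n) * V P) = st (sm E 1 * (V P * U (- n)))" unfolding E_def by (simp only: U_V_commute)
  then have "st (V P) * U n = (U n * st (V P)) * sm (cnj E) 1"
    by (simp only: st_mult st_sm_one st_U_uminus mult.assoc)
  then show ?thesis unfolding E_def[symmetric] by (simp only: sm_one_central)
qed

lemma st_V_mult_V: "st (V q) * V p = V (nica_shift q p) * st (V (nica_shift p q))"
proof -
  define P Q where "P = nica_shift p q" and "Q = nica_shift q p"
  have p: "V (vmax p q) = V p * V P" unfolding P_def by (simp only: add_nica_shift V_add[symmetric])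
  have q: "V (vmax p q) = V q * V Q" unfolding Q_def by (simp only: add_nica_shift vmax_commute V_add[symmetric])
  have "st (V q) * V p = st (V q) * ((V q * st (V q)) * (V p * st (V p))) * V p"
    by (simp add: mult.assoc V_isometry V_isometry_left)
  also have "\<dots> = st (V q) * (V (vmax p q) * st (V (vmax p q))) * V p"
    using V_Nica[of q p] by (simp only: vmax_commute)
  also have "\<dots> = st (V q) * ((V q * V Q) * (st (V P) * st (V p))) * V p"
    using p q by (simp add: st_mult)
  also have "\<dots> = V Q * st (V P)"
    by (simp add: mult.assoc V_isometry V_isometry_left)
  finally show ?thesis unfolding P_def Q_def .
qed

lemma alpha_V: "\<alpha> t (V p) = sm (exp (\<i> * complex_of_real (t * dotr p r))) 1 * V p"
  using dynV sm_eq_mult by metis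

lemma alpha_st_V: "\<alpha> t (st (V p)) = sm (exp (\<i> * complex_of_real (t * - dotr p r))) 1 * st (V p)"
proof -
  have "\<alpha> t (st (V p)) = st (\<alpha> t (V p))"
    using dyn by (simp add: is_dynamics_def star_automorphism_def)
  also have "\<dots> = sm (cnj (exp (\<i> * complex_of_real (t * dotr p r)))) 1 * st (V p)"
    unfolding alpha_V st_mult st_sm_one by (rule sm_one_central[symmetric])
  finally show ?thesis by (simp add: exp_cnj)
qed

lemma state_V_range_projection: "\<phi> (V m * st (V m)) = exp (- complex_of_real (\<beta> * dotr m r))"
  using kms_eigenvector_twisted_trace[OF kms beta_pos alpha_V, of m "st (V m)"]
  by (simp add: V_isometry state_one)

lemma state_mult_st_V_eq_zero: "st (V q) * X = 0 \<Longrightarrow> \<phi> (X * st (V q)) = 0"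
  using kms_eigenvector_twisted_trace[OF kms beta_pos alpha_st_V, of q X] by simp

lemma twisted_shift_gchar:
  fixes p q :: "nat^'k"
  defines "P \<equiv> nica_shift p q"
  shows "\<phi> (V p * \<iota> (gchar n) * st (V q))
       = \<phi> (V (p + P) * \<iota> (\<lambda>x. gchar n (x + thetaT \<theta> P)) * st (V (q + P)))"
proof -
  define E where "E = exp (2 * pi * \<i> * complex_of_real (bil P \<theta> n))"
  have shifted: "\<iota> (\<lambda>x. gchar n (x + thetaT \<theta> P)) = sm E 1 * U n"
    unfolding gchar_shift E_def[symmetric] by (simp add: iota_scale[OF Csd_gchar] iota_gchar)
  have "V P * (sm E 1 * U n) = U n * V P"
    unfolding E_def by (simp add: U_V_commute mult_sm_one_left_commute)
  then have rhs: "V (p + P) * \<iota> (\<lambda>x. gchar n (x + thetaT \<theta> P)) * st (V (q + P))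
      = V p * U n * (V P * st (V P)) * st (V q)"
    unfolding shifted V_add st_mult by (simp add: mult.assoc)
  define X where "X = V p * U n * (1 - V P * st (V P))"
  have "st (V q) * X = 0"
  proof -
    define c where "c = cnj (exp (2 * pi * \<i> * complex_of_real (bil P \<theta> (- n))))"
    have "st (V q) * X = (st (V q) * V p) * U n * (1 - V P * st (V P))"
      unfolding X_def by (simp add: mult.assoc)
    also have "\<dots> = V (nica_shift q p) * (st (V P) * U n) * (1 - V P * st (V P))"
      unfolding st_V_mult_V P_def by (simp add: mult.assoc)
    also have "\<dots> = V (nica_shift q p) * (sm c 1 * U n) * (st (V P) * (1 - V P * st (V P)))"
      unfolding st_V_U_commute c_def[symmetric] by (simp add: mult.assoc)
    also have "st (V P) * (1 - V P * st (V P)) = 0"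
      by (simp add: right_diff_distrib mult.assoc[symmetric] V_isometry)
    finally show ?thesis by simp
  qed
  then have "\<phi> (X * st (V q)) = 0" by (rule state_mult_st_V_eq_zero)
  then show ?thesis
    unfolding rhs iota_gchar X_def by (simp add: right_diff_distrib left_diff_distrib state_diff)
qed

lemma state_V_iota_st_V_bound:
  assumes "h \<in> Csd" and "\<And>x. cmod (h x) \<le> M"
  shows "cmod (\<phi> (V p * \<iota> h * st (V q))) \<le> M * exp (- (\<beta> * (dotr p r + dotr q r) / 2))"
proof -
  have "exp (- complex_of_real (\<beta> * dotr m r)) = complex_of_real (exp (- (\<beta> * dotr m r)))" for m
    by (simp only: of_real_exp of_real_minus)
  then have "Re (\<phi> (V m * st (V m))) = exp (- (\<beta> * dotr m r))" for m
    by (simp only: state_V_range_projection Re_complex_of_real)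
  then have "Re (\<phi> (V p * st (V p))) * Re (\<phi> (V q * st (V q)))
      = (exp (- (\<beta> * (dotr p r + dotr q r) / 2)))^2"
    by (simp add: power2_eq_square flip: exp_add) (simp add: field_simps)
  then have "sqrt (Re (\<phi> (V p * st (V p))) * Re (\<phi> (V q * st (V q))))
      = exp (- (\<beta> * (dotr p r + dotr q r) / 2))"
    by simp
  then show ?thesis using state_iota_bound[OF assms, of "V p" "V q"] by (simp only:)
qed

lemma twisted_shift:
  fixes p q :: "nat^'k"
  assumes f: "f \<in> Csd"
  defines "P \<equiv> nica_shift p q"
  shows "\<phi> (V p * \<iota> f * st (V q)) = \<phi> (V (p + P) * \<iota> (\<lambda>x. f (x + thetaT \<theta> P)) * st (V (q + P)))"
proof -
  define y where "y = thetaT \<theta> P"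
  define D where "D h = \<phi> (V p * \<iota> h * st (V q)) - \<phi> (V (p + P) * \<iota> (\<lambda>x. h (x + y)) * st (V (q + P)))" for h
  define C where "C = exp (- (\<beta> * (dotr p r + dotr q r) / 2))
      + exp (- (\<beta> * (dotr (p + P) r + dotr (q + P) r) / 2))"
  have "D f = 0"
  proof (rule Csd_functional_eq_zero[OF _ _ _ _ f])
    show "D (\<lambda>x. g x + h x) = D g + D h" if "g \<in> Csd" "h \<in> Csd" for g h
      unfolding D_def using iota_add[OF that] iota_add[OF Csd_shift[OF that(1)] Csd_shift[OF that(2)], of y]
      by (simp add: distrib_left distrib_right state_add)
    show "D (\<lambda>x. c * g x) = c * D g" if "g \<in> Csd" for g c
      unfolding D_def using iota_scale[OF that, of c] iota_scale[OF Csd_shift[OF that], of c y]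
      by (simp add: mult.assoc mult_sm_one_left_commute state_sm_one right_diff_distrib)
    show "D (gchar n) = 0" for n
      unfolding D_def y_def P_def using twisted_shift_gchar[of p n q] by simp
    show "cmod (D h) \<le> C * M" if h: "h \<in> Csd" and M: "\<And>x. cmod (h x) \<le> M" for h M
    proof -
      have "cmod (D h) \<le> cmod (\<phi> (V p * \<iota> h * st (V q)))
          + cmod (\<phi> (V (p + P) * \<iota> (\<lambda>x. h (x + y)) * st (V (q + P))))"
        unfolding D_def by (rule norm_triangle_ineq4)
      also have "\<dots> \<le> C * M"
        unfolding C_def distrib_right
        by (intro add_mono) (simp_all add: mult.commute state_V_iota_st_V_bound h M Csd_shift)
      finally show ?thesis .
    qed
  qed
  then show ?thesis unfolding D_def y_def by simp
qed

lemma twisted_shift_iterate: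
  fixes p q :: "nat^'k"
  assumes f: "f \<in> Csd"
  defines "P \<equiv> nica_shift p q"
  shows "\<phi> (V p * \<iota> f * st (V q))
       = \<phi> (V (\<chi> i. p$i + l * P$i) * \<iota> (\<lambda>x. f (x + real l *\<^sub>R thetaT \<theta> P)) * st (V (\<chi> i. q$i + l * P$i)))"
proof (induction l)
  case 0
  then show ?case by (simp add: vec_eq_iff)
next
  case (Suc l)
  define c where "c = (\<chi> i. l * P$i)"
  have p: "(\<chi> i. p$i + l * P$i) = p + c" and q: "(\<chi> i. q$i + l * P$i) = q + c"
    by (simp_all add: vec_eq_iff c_def)
  have "\<phi> (V p * \<iota> f * st (V q))
      = \<phi> (V (p + c) * \<iota> (\<lambda>x. f (x + real l *\<^sub>R thetaT \<theta> P)) * st (V (q + c)))"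
    using Suc.IH unfolding p q .
  also have "\<dots> = \<phi> (V (p + c + P) * \<iota> (\<lambda>x. f (x + thetaT \<theta> P + real l *\<^sub>R thetaT \<theta> P))
      * st (V (q + c + P)))"
    using twisted_shift[OF Csd_shift[OF f, of "real l *\<^sub>R thetaT \<theta> P"], of "p + c" "q + c"]
    unfolding nica_shift_add_both P_def .
  also have "p + c + P = (\<chi> i. p$i + Suc l * P$i)"
    by (simp add: vec_eq_iff c_def)
  also have "q + c + P = (\<chi> i. q$i + Suc l * P$i)"
    by (simp add: vec_eq_iff c_def)
  also have "(\<lambda>x. f (x + thetaT \<theta> P + real l *\<^sub>R thetaT \<theta> P))
      = (\<lambda>x. f (x + real (Suc l) *\<^sub>R thetaT \<theta> P))"
    by (simp add: algebra_simps)
  finally show ?case .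
qed

lemma state_vanishes_off_diagonal:
  assumes r: "\<forall>i. r$i > 0" and pq: "dotr p r = dotr q r" and ne: "p \<noteq> q" and f: "f \<in> Csd"
  shows "\<phi> (V p * \<iota> f * st (V q)) = 0"
proof -
  define P where "P = nica_shift p q"
  define x where "x = exp (- (\<beta> * dotr P r))"
  have x: "0 < x" "x < 1"
    unfolding x_def P_def using dotr_nica_shift_pos[OF r pq ne] beta_pos by auto
  obtain M where M: "\<And>x. cmod (f x) \<le> M" using Csd_bounded[OF f] by blast
  define K where "K = M * exp (- (\<beta> * dotr p r))"
  have "cmod (\<phi> (V p * \<iota> f * st (V q))) \<le> K * x ^ l" for l :: nat
  proof -
    define pl ql where "pl = (\<chi> i. p$i + l * P$i)" and "ql = (\<chi> i. q$i + l * P$i)"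
    have "cmod (\<phi> (V p * \<iota> f * st (V q)))
        = cmod (\<phi> (V pl * \<iota> (\<lambda>x. f (x + real l *\<^sub>R thetaT \<theta> P)) * st (V ql)))"
      using twisted_shift_iterate[OF f, of p q l] unfolding pl_def ql_def P_def by simp
    also have "\<dots> \<le> M * exp (- (\<beta> * (dotr pl r + dotr ql r) / 2))"
      by (intro state_V_iota_st_V_bound Csd_shift f M)
    also have "exp (- (\<beta> * (dotr pl r + dotr ql r) / 2)) = exp (- (\<beta> * dotr p r)) * x ^ l"
      using pq unfolding pl_def ql_def x_def
      by (simp add: dotr_iterate algebra_simps flip: exp_of_nat_mult exp_add)
    finally show ?thesis unfolding K_def by (simp add: mult.assoc)
  qed
  moreover have "(\<lambda>l. K * x ^ l) \<longlonglongrightarrow> 0"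
    using x by (intro tendsto_mult_right_zero LIMSEQ_power_zero) simp
  ultimately have "cmod (\<phi> (V p * \<iota> f * st (V q))) \<le> 0"
    by (intro LIMSEQ_le_const) auto
  then show ?thesis by simp
qed

end

theorem mainTheorem6:
  fixes sm :: "complex \<Rightarrow> 'a::{real_normed_algebra_1,banach} \<Rightarrow> 'a"
    and st :: "'a \<Rightarrow> 'a"
    and \<theta> :: "real^'d^'k" and r :: "real^'k" and \<beta> :: real
    and U :: "int^'d \<Rightarrow> 'a" and V :: "nat^'k \<Rightarrow> 'a"
    and \<iota> :: "(real^'d \<Rightarrow> complex) \<Rightarrow> 'a"
    and \<alpha> :: "real \<Rightarrow> 'a \<Rightarrow> 'a" and \<phi> :: "'a \<Rightarrow> complex"
    and p q :: "nat^'k" and f :: "real^'d \<Rightarrow> complex"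
  assumes alg: "cstar_algebra sm st"
    and rel: "Btheta_relations sm st \<theta> U V"
    and iota: "is_iota sm st U \<iota>"
    and theta_nonneg: "\<forall>i j. \<theta>$i$j \<ge> 0"
    and r_pos: "\<forall>i. r$i > 0"
    and beta_pos: "\<beta> > 0"
    and dyn: "is_dynamics sm st \<alpha>"
    and dynU: "\<forall>t n. \<alpha> t (U n) = U n"
    and dynV: "\<forall>t p. \<alpha> t (V p) = sm (exp (\<i> * complex_of_real (t * dotr p r))) (V p)"
    and state: "is_state sm st \<phi>"
    and kms: "is_KMS \<beta> \<alpha> \<phi>"
    and pq: "dotr p r = dotr q r"
    and f: "f \<in> Csd"
  shows "(\<forall>l::nat. \<phi> (V p * \<iota> f * st (V q)) =
            \<phi> (V (\<chi> i. p$i + l * (vmax p q $ i - p$i))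
               * \<iota> (\<lambda>x. f (x + real l *\<^sub>R thetaT \<theta> (\<chi> i. vmax p q $ i - p$i)))
               * st (V (\<chi> i. q$i + l * (vmax p q $ i - p$i)))))
         \<and> (p \<noteq> q \<longrightarrow> \<phi> (V p * \<iota> f * st (V q)) = 0)"
proof -
  interpret Btheta_kms sm st \<phi> U \<iota> \<theta> r \<beta> \<alpha> V
    using alg state iota rel dyn dynV kms beta_pos
    by (simp add: Btheta_kms_def Btheta_kms_axioms_def iota_state_def iota_state_axioms_def
        cstar_state_def cstar_state_axioms_def unital_cstar_def)
  show ?thesis
    using twisted_shift_iterate[OF f, of p q] state_vanishes_off_diagonal[OF r_pos pq _ f]
    by (simp add: nica_shift_def)
qed

end
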